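(* For each integer $n\ge0$ let $P_n(x)=\omega_n^-(x)$ denote the number of square-free words of length $n$ over an alphabet with $x$ letters ($x$ a positive integer). Then there is a polynomial in $x$ of degree $n$ with integer coefficients and leading coefficient $1$ which coincides with $P_n(x)$ for all positive integers $x$. Moreover, for $n>1$, $P_n(x)$ is a multiple of $x(x-1)$, and for $n>3$, $P_n(x)$ is a multiple of $x(x-1)(x-2)$. Explicitly, $P_0=1$, $P_1=x$, $P_2=x(x-1)$, $P_3=x(x-1)^2$, $P_4=x^2(x-1)(x-2)$.
   Context: A square is a nonempty word of the form $uu$; a word is square-free if no contiguous subword (factor) of it, including the word itself, is a square. *)

theory Defs
  imports "HOL-Computational_Algebra.Polynomial"
begin

definition square_free :: "'a list \<Rightarrow> bool" where
  "square_free w \<longleftrightarrow> \<not> (\<exists>v u z. u \<noteq> [] \<and> w = v @ u @ u @ z)"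

definition sqfree_count :: "nat \<Rightarrow> nat \<Rightarrow> nat" where
  "sqfree_count n x = card {w :: nat list. length w = n \<and> set w \<subseteq> {..<x} \<and> square_free w}"

end

theory Submission
  imports Defs "HOL-Library.FuncSet"
begin

text \<open>Call two words equivalent if they have the same letters at the same pairs of
  positions. Square-freeness is invariant under this equivalence, and the words over
  an x-letter alphabet equivalent to a word with k distinct letters correspond to the
  injections of those k letters into the alphabet, so there are x(x-1)...(x-k+1) of them.
  Choosing in each class the word whose letters are the positions of their first
  occurrences, P_n is a sum of falling factorials, one for each such canonical
  square-free word of length n. Only [0, 1, ..., n-1] has n distinct letters, which
  makes P_n monic of degree n; a square-free word of length at least 2 (resp. 4) has at
  least 2 (resp. 3) distinct letters, which gives the divisibility. The explicit values
  come from listing the canonical square-free words of length at most 4.\<close>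

lemma square_not_square_free: "s \<noteq> [] \<Longrightarrow> \<not> square_free (v @ s @ s @ z)"
  unfolding square_free_def by blast

lemma distinct_square_free: "distinct w \<Longrightarrow> square_free w"
  unfolding square_free_def by (auto simp: neq_Nil_conv)

lemma square_free_appendD: "square_free (u @ v) \<Longrightarrow> square_free u"
  unfolding square_free_def by (metis append.assoc)

lemma square_free_2: "square_free [a, b] \<longleftrightarrow> a \<noteq> b"
  using square_not_square_free[of "[a]" "[]" "[]"] distinct_square_free[of "[a, b]"] by auto

lemma square_free_3: "square_free [a, b, c] \<longleftrightarrow> a \<noteq> b \<and> b \<noteq> c"
proof
  assume "square_free [a, b, c]"
  then show "a \<noteq> b \<and> b \<noteq> c"
    using square_not_square_free[of "[a]" "[]"] square_not_square_free[of "[b]" "[a]"] by auto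
qed (auto simp: square_free_def Cons_eq_append_conv)

lemma square_free_4:
  "square_free [a, b, c, d] \<longleftrightarrow> a \<noteq> b \<and> b \<noteq> c \<and> c \<noteq> d \<and> (a \<noteq> c \<or> b \<noteq> d)"
proof
  assume "square_free [a, b, c, d]"
  then show "a \<noteq> b \<and> b \<noteq> c \<and> c \<noteq> d \<and> (a \<noteq> c \<or> b \<noteq> d)"
    using square_not_square_free[of "[a]" "[]"] square_not_square_free[of "[b]" "[a]"]
      square_not_square_free[of "[c]" "[a, b]"] square_not_square_free[of "[a, b]" "[]"]
    by auto
qed (auto simp: square_free_def Cons_eq_append_conv)

lemma two_le_card_set_square_free:
  assumes "square_free w" "2 \<le> length w"
  shows "2 \<le> card (set w)"
proof -
  obtain a b r where w: "w = [a, b] @ r"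
    using assms(2) by (auto simp: Suc_le_length_iff eval_nat_numeral)
  then have "a \<noteq> b"
    using assms(1) square_free_appendD square_free_2 by metis
  then have "2 = card {a, b}" by simp
  also have "\<dots> \<le> card (set w)" using w by (intro card_mono) auto
  finally show ?thesis .
qed

lemma three_le_card_set_square_free:
  assumes "square_free w" "4 \<le> length w"
  shows "3 \<le> card (set w)"
proof -
  obtain a b c d r where w: "w = [a, b, c, d] @ r"
    using assms(2) by (auto simp: Suc_le_length_iff eval_nat_numeral)
  then have "square_free [a, b, c, d]"
    using assms(1) square_free_appendD by blast
  then have "3 \<le> card {a, b, c, d}"
    unfolding square_free_4 by (auto simp: card_insert_if)
  also have "\<dots> \<le> card (set w)" using w by (intro card_mono) auto
  finally show ?thesis .
qed

lemma square_free_map_iff: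
  assumes "inj_on f (set w)"
  shows "square_free (map f w) \<longleftrightarrow> square_free w"
proof
  assume sf: "square_free (map f w)"
  show "square_free w"
    unfolding square_free_def
  proof clarify
    fix v s z assume "s \<noteq> []" "w = v @ s @ s @ z"
    with sf show False
      using square_not_square_free[of "map f s" "map f v" "map f z"] by simp
  qed
next
  assume sf: "square_free w"
  show "square_free (map f w)"
    unfolding square_free_def
  proof clarify
    fix v s z
    assume "s \<noteq> []" and "map f w = v @ s @ s @ z"
    from this(2)[unfolded map_eq_append_conv] obtain v' r
      where "w = v' @ r" "s @ s @ z = map f r"
      by blast
    moreover from this(2)[symmetric, unfolded map_eq_append_conv] obtain s\<^sub>1 r'
      where "r = s\<^sub>1 @ r'" "s = map f s\<^sub>1" "s @ z = map f r'"
      by blast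
    moreover from this(3)[symmetric, unfolded map_eq_append_conv] obtain s\<^sub>2 z'
      where "r' = s\<^sub>2 @ z'" "s = map f s\<^sub>2"
      by blast
    ultimately have w: "w = v' @ s\<^sub>1 @ s\<^sub>2 @ z'" and s: "map f s\<^sub>1 = map f s\<^sub>2"
      by simp_all
    have "inj_on f (set s\<^sub>1 \<union> set s\<^sub>2)"
      by (rule inj_on_subset[OF assms]) (auto simp: w)
    with s have "s\<^sub>2 = s\<^sub>1"
      by (simp add: inj_on_map_eq_map)
    moreover have "s\<^sub>1 \<noteq> []"
      using \<open>s \<noteq> []\<close> \<open>s = map f s\<^sub>1\<close> by auto
    ultimately show False
      using sf square_not_square_free[of s\<^sub>1 v' z'] w by simp
  qed
qed

definition same_pattern :: "'a list \<Rightarrow> 'b list \<Rightarrow> bool" where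
  "same_pattern w u \<longleftrightarrow>
     length w = length u \<and> (\<forall>i<length u. \<forall>j<length u. w ! i = w ! j \<longleftrightarrow> u ! i = u ! j)"

lemma same_pattern_sym: "same_pattern w u \<Longrightarrow> same_pattern u w"
  unfolding same_pattern_def by auto

lemma same_pattern_trans: "same_pattern w u \<Longrightarrow> same_pattern u v \<Longrightarrow> same_pattern w v"
  unfolding same_pattern_def by auto

lemma same_pattern_iff_map: "same_pattern w u \<longleftrightarrow> (\<exists>f. inj_on f (set u) \<and> w = map f u)"
proof
  assume "same_pattern w u"
  then have len: "length w = length u"
    and pat: "\<And>i j. i < length u \<Longrightarrow> j < length u \<Longrightarrow> w ! i = w ! j \<longleftrightarrow> u ! i = u ! j"
    unfolding same_pattern_def by simp_all
  obtain pos where pos: "\<forall>a\<in>set u. pos a < length u \<and> u ! pos a = a"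
    using bchoice[of "set u" "\<lambda>a i. i < length u \<and> u ! i = a"] by (auto simp: in_set_conv_nth)
  have "inj_on (\<lambda>a. w ! pos a) (set u)"
  proof (rule inj_onI)
    fix a b assume "a \<in> set u" "b \<in> set u" "w ! pos a = w ! pos b"
    with pos pat show "a = b" by metis
  qed
  moreover have "w = map (\<lambda>a. w ! pos a) u"
    using len pat pos by (auto simp: list_eq_iff_nth_eq)
  ultimately show "\<exists>f. inj_on f (set u) \<and> w = map f u" by blast
next
  assume "\<exists>f. inj_on f (set u) \<and> w = map f u"
  then obtain f where "inj_on f (set u)" "w = map f u" by blast
  then show "same_pattern w u"
    unfolding same_pattern_def by (simp add: inj_on_eq_iff)
qed

lemma same_pattern_square_free: "same_pattern w u \<Longrightarrow> square_free w \<longleftrightarrow> square_free u"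
  using same_pattern_iff_map square_free_map_iff by metis

lemma card_same_pattern:
  assumes "finite A"
  shows "card {w. set w \<subseteq> A \<and> same_pattern w u} = (\<Prod>i<card (set u). card A - i)"
proof -
  let ?inj = "{f \<in> set u \<rightarrow>\<^sub>E A. inj_on f (set u)}"
  have "{w. set w \<subseteq> A \<and> same_pattern w u} = (\<lambda>f. map f u) ` ?inj"
  proof (intro equalityI subsetI)
    fix w assume "w \<in> {w. set w \<subseteq> A \<and> same_pattern w u}"
    then obtain f where f: "inj_on f (set u)" "w = map f u" "set w \<subseteq> A"
      using same_pattern_iff_map by blast
    then have "restrict f (set u) \<in> ?inj"
      by (auto simp: inj_on_def)
    moreover have "w = map (restrict f (set u)) u"
      using f by simp
    ultimately show "w \<in> (\<lambda>f. map f u) ` ?inj" by blast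
  next
    fix w assume "w \<in> (\<lambda>f. map f u) ` ?inj"
    then show "w \<in> {w. set w \<subseteq> A \<and> same_pattern w u}"
      using same_pattern_iff_map by fastforce
  qed
  moreover have "inj_on (\<lambda>f. map f u) ?inj"
  proof (rule inj_onI)
    fix f g assume "f \<in> ?inj" "g \<in> ?inj" "map f u = map g u"
    then show "f = g"
      by (intro extensionalityI[of f "set u" g]) (auto simp: PiE_iff)
  qed
  ultimately have "card {w. set w \<subseteq> A \<and> same_pattern w u} = card ?inj"
    by (simp add: card_image)
  also have "\<dots> = (\<Prod>i<card (set u). card A - i)"
    using card_inj_on_subset_funcset[of "set u" A "set u"] assms
    by (simp add: atLeast0LessThan)
  finally show ?thesis .
qed

text \<open>In a canonical word every letter is the position of its first occurrence.\<close>

definition canonical :: "nat list \<Rightarrow> bool" where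
  "canonical u \<longleftrightarrow> (\<forall>j<length u. u ! j \<le> j \<and> u ! (u ! j) = u ! j)"

definition canonical_pattern :: "'a list \<Rightarrow> nat list" where
  "canonical_pattern w = map (\<lambda>a. LEAST i. w ! i = a) w"

lemma
  shows canonical_canonical_pattern: "canonical (canonical_pattern w)"
    and same_pattern_canonical_pattern: "same_pattern w (canonical_pattern w)"
proof -
  define first where "first a = (LEAST i. w ! i = a)" for a
  have first: "first (w ! j) \<le> j" "w ! first (w ! j) = w ! j" for j
    unfolding first_def by (auto intro: Least_le LeastI)
  then have "first (w ! j) < length w" if "j < length w" for j
    using that le_less_trans by blast
  with first show "canonical (canonical_pattern w)"
    unfolding canonical_def canonical_pattern_def first_def[symmetric] by simp
  have "inj_on first (set w)"
    by (rule inj_onI) (metis first(2) in_set_conv_nth)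
  then show "same_pattern w (canonical_pattern w)"
    unfolding canonical_pattern_def first_def[symmetric]
    using same_pattern_iff_map same_pattern_sym by blast
qed

lemma canonical_unique:
  assumes "canonical u" "canonical v" "same_pattern u v"
  shows "u = v"
proof (rule nth_equalityI)
  show len: "length u = length v"
    using assms(3) unfolding same_pattern_def by simp
  have pat: "u ! i = u ! k \<longleftrightarrow> v ! i = v ! k" if "i < length u" "k < length u" for i k
    using assms(3) that len unfolding same_pattern_def by simp
  have u: "u ! i \<le> i" "u ! (u ! i) = u ! i" and v: "v ! i \<le> i" "v ! (v ! i) = v ! i"
    if "i < length u" for i
    using assms(1,2) that len unfolding canonical_def by auto
  fix j assume j: "j < length u"
  then have j': "u ! j < length u" "v ! j < length u"
    using u(1) v(1) by (meson le_less_trans)+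
  have "v ! j = v ! (u ! j)" using pat[OF j'(1) j] u(2)[OF j] by simp
  also have "\<dots> \<le> u ! j" using v(1)[OF j'(1)] .
  finally have "v ! j \<le> u ! j" .
  moreover have "u ! j = u ! (v ! j)" using pat[OF j'(2) j] v(2)[OF j] by simp
  then have "u ! j \<le> v ! j" using u(1)[OF j'(2)] by simp
  ultimately show "u ! j = v ! j" by simp
qed

lemma canonical_set_subset: "canonical u \<Longrightarrow> set u \<subseteq> {..<length u}"
  unfolding canonical_def by (auto simp: in_set_conv_nth) (meson le_less_trans)

lemma canonical_distinct: "canonical u \<Longrightarrow> distinct u \<Longrightarrow> u = [0..<length u]"
  unfolding canonical_def
  by (intro nth_equalityI) (auto simp: nth_eq_iff_index_eq)

definition sqfree_patterns :: "nat \<Rightarrow> nat list set" where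
  "sqfree_patterns n = {u. length u = n \<and> canonical u \<and> square_free u}"

lemma upt_in_sqfree_patterns: "[0..<n] \<in> sqfree_patterns n"
  unfolding sqfree_patterns_def canonical_def by (simp add: distinct_square_free)

lemma finite_sqfree_patterns: "finite (sqfree_patterns n)"
proof (rule finite_subset)
  show "sqfree_patterns n \<subseteq> {u. set u \<subseteq> {..<n} \<and> length u = n}"
    unfolding sqfree_patterns_def using canonical_set_subset by blast
qed (simp add: finite_lists_length_eq)

lemma sqfree_count_eq_sum:
  "sqfree_count n x = (\<Sum>u\<in>sqfree_patterns n. \<Prod>i<card (set u). x - i)"
proof -
  let ?class = "\<lambda>u. {w. set w \<subseteq> {..<x} \<and> same_pattern w u}"
  have "{w. length w = n \<and> set w \<subseteq> {..<x} \<and> square_free w} = (\<Union>u\<in>sqfree_patterns n. ?class u)"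
  proof (intro equalityI subsetI)
    fix w assume w: "w \<in> {w. length w = n \<and> set w \<subseteq> {..<x} \<and> square_free w}"
    then have "canonical_pattern w \<in> sqfree_patterns n"
      using canonical_canonical_pattern same_pattern_canonical_pattern[of w] same_pattern_square_free
      unfolding sqfree_patterns_def same_pattern_def by auto
    moreover have "w \<in> ?class (canonical_pattern w)"
      using w same_pattern_canonical_pattern by auto
    ultimately show "w \<in> (\<Union>u\<in>sqfree_patterns n. ?class u)" by blast
  next
    fix w assume "w \<in> (\<Union>u\<in>sqfree_patterns n. ?class u)"
    then obtain u where "u \<in> sqfree_patterns n" "set w \<subseteq> {..<x}" "same_pattern w u"
      by blast
    then show "w \<in> {w. length w = n \<and> set w \<subseteq> {..<x} \<and> square_free w}"
      unfolding sqfree_patterns_def using same_pattern_square_free[of w u]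
      by (auto simp: same_pattern_def)
  qed
  moreover have "?class u \<inter> ?class v = {}"
    if "u \<in> sqfree_patterns n" "v \<in> sqfree_patterns n" "u \<noteq> v" for u v
    using that canonical_unique same_pattern_sym same_pattern_trans
    unfolding sqfree_patterns_def by blast
  moreover have "finite (?class u)" for u :: "nat list"
    by (rule finite_subset[of _ "{w. set w \<subseteq> {..<x} \<and> length w = length u}"])
      (auto simp: same_pattern_def finite_lists_length_eq)
  ultimately have "sqfree_count n x = (\<Sum>u\<in>sqfree_patterns n. card (?class u))"
    unfolding sqfree_count_def by (simp add: card_UN_disjoint[OF finite_sqfree_patterns])
  then show ?thesis
    by (simp add: card_same_pattern)
qed

definition falling_factorial_poly :: "nat \<Rightarrow> int poly" where
  "falling_factorial_poly k = (\<Prod>i<k. [:- int i, 1:])"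

lemma poly_falling_factorial_poly: "poly (falling_factorial_poly k) y = (\<Prod>i<k. y - int i)"
  by (simp add: falling_factorial_poly_def poly_prod)

lemma degree_falling_factorial_poly: "degree (falling_factorial_poly k) = k"
  unfolding falling_factorial_poly_def by (subst degree_prod_eq_sum_degree) auto

lemma lead_coeff_falling_factorial_poly: "lead_coeff (falling_factorial_poly k) = 1"
  unfolding falling_factorial_poly_def by (simp add: lead_coeff_prod)

lemma falling_factorial_poly_dvd: "m \<le> k \<Longrightarrow> falling_factorial_poly m dvd falling_factorial_poly k"
  unfolding falling_factorial_poly_def by (rule prod_dvd_prod_subset) auto

lemma of_nat_prod_diff: "int (\<Prod>i<k. x - i) = (\<Prod>i<k. int x - int i)"
proof (cases "k \<le> x")
  case True
  then show ?thesis
    unfolding of_nat_prod by (intro prod.cong) auto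
next
  case False
  then have "x \<in> {..<k}" by simp
  then have "(\<Prod>i<k. x - i) = 0" "(\<Prod>i<k. int x - int i) = 0"
    by (auto intro!: prod_zero)
  then show ?thesis by (simp only: of_nat_0)
qed

definition sqfree_count_poly :: "nat \<Rightarrow> int poly" where
  "sqfree_count_poly n = (\<Sum>u\<in>sqfree_patterns n. falling_factorial_poly (card (set u)))"

lemma poly_sqfree_count_poly: "poly (sqfree_count_poly n) (int x) = int (sqfree_count n x)"
  by (simp add: sqfree_count_poly_def poly_sum poly_falling_factorial_poly sqfree_count_eq_sum
      of_nat_prod_diff del: of_nat_prod)

lemma falling_factorial_poly_dvd_sqfree_count_poly:
  assumes "\<And>w :: nat list. length w = n \<Longrightarrow> square_free w \<Longrightarrow> k \<le> card (set w)"
  shows "falling_factorial_poly k dvd sqfree_count_poly n"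
  unfolding sqfree_count_poly_def using assms
  by (auto intro!: dvd_sum falling_factorial_poly_dvd simp: sqfree_patterns_def)

lemma card_set_less_if_sqfree_pattern_ne_upt:
  assumes "u \<in> sqfree_patterns n" "u \<noteq> [0..<n]"
  shows "card (set u) < n"
proof -
  have "canonical u" "length u = n"
    using assms(1) unfolding sqfree_patterns_def by auto
  then have "\<not> distinct u"
    using assms(2) canonical_distinct by metis
  then show ?thesis
    using card_length[of u] card_distinct[of u] \<open>length u = n\<close> by linarith
qed

lemma
  shows degree_sqfree_count_poly: "degree (sqfree_count_poly n) = n"
    and lead_coeff_sqfree_count_poly: "lead_coeff (sqfree_count_poly n) = 1"
proof -
  define r where "r = (\<Sum>u\<in>sqfree_patterns n - {[0..<n]}. falling_factorial_poly (card (set u)))"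
  have split: "sqfree_count_poly n = r + falling_factorial_poly n"
    unfolding sqfree_count_poly_def r_def
    by (simp add: sum.remove[OF finite_sqfree_patterns upt_in_sqfree_patterns])
  have less: "card (set u) < n" if "u \<in> sqfree_patterns n - {[0..<n]}" for u
    using that card_set_less_if_sqfree_pattern_ne_upt by blast
  have "r = 0 \<or> degree r < n"
  proof (cases "n = 0")
    case True
    then show ?thesis using less unfolding r_def by (metis not_less_zero sum.neutral)
  next
    case False
    then show ?thesis
      unfolding r_def using less
      by (intro disjI2 degree_sum_less) (simp_all add: degree_falling_factorial_poly)
  qed
  then show "degree (sqfree_count_poly n) = n" "lead_coeff (sqfree_count_poly n) = 1"
    unfolding split using lead_coeff_falling_factorial_poly[of n]
    by (auto simp: degree_add_eq_right degree_falling_factorial_poly coeff_eq_0)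
qed

lemma sqfree_patterns_0: "sqfree_patterns 0 = {[]}"
  by (auto simp: sqfree_patterns_def canonical_def distinct_square_free)

lemma sqfree_patterns_1: "sqfree_patterns 1 = {[0]}"
  by (auto simp: sqfree_patterns_def canonical_def distinct_square_free length_Suc_conv)

lemma sqfree_patterns_2: "sqfree_patterns 2 = {[0, 1]}"
proof (rule equalityI[OF subsetI])
  fix u assume "u \<in> sqfree_patterns 2"
  then obtain a b where "u = [a, b]" "canonical [a, b]" "square_free [a, b]"
    unfolding sqfree_patterns_def by (auto simp: length_Suc_conv numeral_eq_Suc)
  then show "u \<in> {[0, 1]}"
    unfolding canonical_def square_free_2 by (auto simp: All_less_Suc le_Suc_eq numeral_eq_Suc)
qed (simp add: sqfree_patterns_def canonical_def All_less_Suc numeral_eq_Suc square_free_2)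

lemma sqfree_patterns_3: "sqfree_patterns 3 = {[0, 1, 0], [0, 1, 2]}"
proof (rule equalityI[OF subsetI])
  fix u assume "u \<in> sqfree_patterns 3"
  then obtain a b c where "u = [a, b, c]" "canonical [a, b, c]" "square_free [a, b, c]"
    unfolding sqfree_patterns_def by (auto simp: length_Suc_conv numeral_eq_Suc)
  then show "u \<in> {[0, 1, 0], [0, 1, 2]}"
    unfolding canonical_def square_free_3 by (auto simp: All_less_Suc le_Suc_eq numeral_eq_Suc)
qed (simp add: sqfree_patterns_def canonical_def All_less_Suc numeral_eq_Suc square_free_3)

lemma sqfree_patterns_4: "sqfree_patterns 4 = {[0, 1, 0, 3], [0, 1, 2, 0], [0, 1, 2, 1], [0, 1, 2, 3]}"
proof (rule equalityI[OF subsetI])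
  fix u assume "u \<in> sqfree_patterns 4"
  then obtain a b c d where "u = [a, b, c, d]" "canonical [a, b, c, d]" "square_free [a, b, c, d]"
    unfolding sqfree_patterns_def by (auto simp: length_Suc_conv numeral_eq_Suc)
  then show "u \<in> {[0, 1, 0, 3], [0, 1, 2, 0], [0, 1, 2, 1], [0, 1, 2, 3]}"
    unfolding canonical_def square_free_4 by (auto simp: All_less_Suc le_Suc_eq numeral_eq_Suc)
qed (simp add: sqfree_patterns_def canonical_def All_less_Suc numeral_eq_Suc square_free_4)

lemma of_nat_sqfree_count:
  "int (sqfree_count n x) = (\<Sum>u\<in>sqfree_patterns n. \<Prod>i<card (set u). int x - int i)"
  by (simp add: poly_sqfree_count_poly[symmetric] sqfree_count_poly_def poly_sum
      poly_falling_factorial_poly)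

lemma sqfree_count_small_values:
  "int (sqfree_count 0 x) = 1"
  "int (sqfree_count 1 x) = int x"
  "int (sqfree_count 2 x) = int x * (int x - 1)"
  "int (sqfree_count 3 x) = int x * (int x - 1)^2"
  "int (sqfree_count 4 x) = (int x)^2 * (int x - 1) * (int x - 2)"
  unfolding of_nat_sqfree_count sqfree_patterns_0 sqfree_patterns_1 sqfree_patterns_2
    sqfree_patterns_3 sqfree_patterns_4
  by (simp_all add: card_insert_if lessThan_nat_numeral power2_eq_square algebra_simps)

theorem proposition3:
  shows "(\<forall>n. \<exists>p :: int poly.
            degree p = n \<and> lead_coeff p = 1 \<and>
            (\<forall>x::nat. x \<ge> 1 \<longrightarrow> poly p (int x) = int (sqfree_count n x)) \<and>
            (n > 1 \<longrightarrow> [:0, 1:] * [:-1, 1:] dvd p) \<and>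
            (n > 3 \<longrightarrow> [:0, 1:] * [:-1, 1:] * [:-2, 1:] dvd p))
       \<and> (\<forall>x::nat. x \<ge> 1 \<longrightarrow>
            int (sqfree_count 0 x) = 1 \<and>
            int (sqfree_count 1 x) = int x \<and>
            int (sqfree_count 2 x) = int x * (int x - 1) \<and>
            int (sqfree_count 3 x) = int x * (int x - 1)^2 \<and>
            int (sqfree_count 4 x) = (int x)^2 * (int x - 1) * (int x - 2))"
proof -
  have dvd_2: "[:0, 1:] * [:-1, 1:] dvd sqfree_count_poly n" if "1 < n" for n
  proof -
    have "falling_factorial_poly 2 dvd sqfree_count_poly n"
      using that
      by (intro falling_factorial_poly_dvd_sqfree_count_poly two_le_card_set_square_free) auto
    then show ?thesis by (simp add: falling_factorial_poly_def eval_nat_numeral)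
  qed
  have dvd_3: "[:0, 1:] * [:-1, 1:] * [:-2, 1:] dvd sqfree_count_poly n" if "3 < n" for n
  proof -
    have "falling_factorial_poly 3 dvd sqfree_count_poly n"
      using that
      by (intro falling_factorial_poly_dvd_sqfree_count_poly three_le_card_set_square_free) auto
    then show ?thesis by (simp add: falling_factorial_poly_def eval_nat_numeral)
  qed
  show ?thesis
    using degree_sqfree_count_poly lead_coeff_sqfree_count_poly poly_sqfree_count_poly
      dvd_2 dvd_3 sqfree_count_small_values
    by blast
qed

end
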